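(* Let $k\ge1$ and let $x,y$ be integer sequences of length $k$ with identical second-order cyclic statistics, i.e. $S_{i_1,i_2}(x)=S_{i_1,i_2}(y)$ for all indices $i_1,i_2$. Then for each $\alpha\in[k]$, either (1) $\hat{x}_j\neq 0$ and $\hat{y}_j\neq 0$ for all $j\in G_\alpha$, or (2) $\hat{x}_j=\hat{y}_j=0$ for all $j\in G_\alpha$.
   Context: Sequences are indexed modulo $k$. The cyclic statistic is $S_{i_1,\dots,i_m}(x)=\sum_{j=1}^{k} x_{i_1+j}\cdots x_{i_m+j}$ (indices mod $k$). The Fourier transform is $\hat{x}_j=\sum_{\ell=0}^{k-1}x_\ell e^{2\pi i j\ell/k}$ (indices mod $k$). $[k]=\{1,\dots,k\}$ and $G_\alpha=\{j\in[k]:\gcd(j,k)=\alpha\}$. *)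

theory Defs
  imports "HOL-Analysis.Analysis"
begin

text \<open>A length-k sequence is a function nat => int, read modulo k (only x (i mod k) is used).\<close>

definition cyc_stat2 :: "nat \<Rightarrow> (nat \<Rightarrow> int) \<Rightarrow> nat \<Rightarrow> nat \<Rightarrow> int" where
  "cyc_stat2 k x i1 i2 = (\<Sum>j=1..k. x ((i1 + j) mod k) * x ((i2 + j) mod k))"

definition dft :: "nat \<Rightarrow> (nat \<Rightarrow> int) \<Rightarrow> nat \<Rightarrow> complex" where
  "dft k x j = (\<Sum>l<k. of_int (x l) * exp (2 * of_real pi * \<i> * of_nat (j * l) / of_nat k))"

definition G_set :: "nat \<Rightarrow> nat \<Rightarrow> nat set" where
  "G_set k \<alpha> = {j \<in> {1..k}. gcd j k = \<alpha>}"

end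

theory Submission
  imports Defs "Berlekamp_Zassenhaus.Poly_Mod" "HOL-Number_Theory.Cong"
begin

(*
  The power spectrum of a sequence is a linear combination of its second-order cyclic
  statistics, |x^_j|^2 = \<Sum>_d S_{d,0}(x) w^(j d) with w = e^(2 \<pi> i / k), so x^_j and y^_j
  vanish together.  Moreover x^_j = P_x(w^j) for the integer polynomial
  P_x = \<Sum>_l x_l X^l, and for j = \<alpha> a in G_\<alpha> (so k = \<alpha> m with gcd(a, m) = 1) the point
  w^j is z^a with z = w^\<alpha> a root of unity of order dividing m.  All these points are
  Galois conjugate: by Dedekind's argument, an integer polynomial vanishing at a root of
  unity \<eta> with \<eta>^m = 1 also vanishes at \<eta>^p for every prime p not dividing m.  (The
  primitive polynomial f of least degree vanishing at \<eta> divides X^m - 1 = f g; if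
  f(\<eta>^p) \<noteq> 0 then f divides g(X^p) \<equiv> g^p mod p, which contradicts the separability of
  X^m - 1 modulo p.)  Hence P_x vanishes at all of the points w^j, j \<in> G_\<alpha>, or at none.
*)

section \<open>Congruences modulo a prime\<close>

lemma prime_dvd_power_add_sub:
  fixes u v :: "'a::comm_ring_1"
  assumes "prime p"
  shows "of_nat p dvd (u + v) ^ p - (u ^ p + v ^ p)"
proof -
  have p: "p > 1" using assms prime_gt_1_nat by blast
  have "(u + v) ^ p = (\<Sum>k\<le>p. of_nat (p choose k) * u ^ k * v ^ (p - k))"
    by (rule binomial_ring)
  also have "{..p} = insert 0 (insert p {1..<p})" using p by auto
  finally have "(u + v) ^ p - (u ^ p + v ^ p)
      = (\<Sum>k\<in>{1..<p}. of_nat (p choose k) * u ^ k * v ^ (p - k))"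
    using p by (simp add: algebra_simps)
  also have "of_nat p dvd \<dots>"
  proof (intro dvd_sum dvd_mult2)
    fix k assume "k \<in> {1..<p}"
    then have "p dvd p choose k" using assms by (intro dvd_choose_prime) auto
    then show "of_nat p dvd (of_nat (p choose k) :: 'a)" by (metis dvdE dvd_triv_left of_nat_mult)
  qed
  finally show ?thesis .
qed

lemma prime_dvd_power_sub_self_nat:
  assumes "prime p"
  shows "int p dvd int n ^ p - int n"
proof (induction n)
  case 0
  show ?case using prime_gt_0_nat[OF assms] by (simp add: power_0_left)
next
  case (Suc n)
  have "int (Suc n) ^ p - int (Suc n)
      = ((int n + 1) ^ p - (int n ^ p + 1 ^ p)) + (int n ^ p - int n)"
    by (simp add: add.commute)
  then show ?case using Suc prime_dvd_power_add_sub[OF assms, of "int n" 1] by (metis dvd_add)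
qed

lemma prime_dvd_power_sub_self_int:
  fixes a :: int
  assumes "prime p"
  shows "int p dvd a ^ p - a"
proof -
  define r where "r = a mod int p"
  have r: "r = int (nat r)" using assms unfolding r_def by (simp add: prime_gt_0_nat)
  have "(a ^ p - a) mod int p = (r ^ p - r) mod int p"
    unfolding r_def by (metis mod_diff_cong mod_mod_trivial power_mod)
  also have "\<dots> = 0" using prime_dvd_power_sub_self_nat[OF assms, of "nat r"] r by simp
  finally show ?thesis by presburger
qed

lemma prime_dvd_pcompose_monom_sub_power:
  fixes g :: "int poly"
  assumes "prime p"
  shows "of_nat p dvd g \<circ>\<^sub>p monom 1 p - g ^ p"
proof (induction g rule: pCons_induct)
  case 0
  show ?case using prime_gt_0_nat[OF assms] by (simp add: power_0_left)
next
  case (pCons a g)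
  define X :: "int poly" where "X = [:0, 1:]"
  have "pCons a g = [:a:] + X * g"
    unfolding X_def by simp
  moreover have "pCons a g \<circ>\<^sub>p monom 1 p = [:a:] + X ^ p * (g \<circ>\<^sub>p monom 1 p)"
    unfolding X_def by (simp add: pcompose_pCons monom_altdef)
  ultimately have "pCons a g \<circ>\<^sub>p monom 1 p - pCons a g ^ p
      = X ^ p * (g \<circ>\<^sub>p monom 1 p - g ^ p) - [:a ^ p - a:]
        - (([:a:] + X * g) ^ p - ([:a:] ^ p + (X * g) ^ p))"
    by (simp add: power_mult_distrib right_diff_distrib poly_const_pow)
  moreover have "of_nat p dvd [:a ^ p - a:]"
    using prime_dvd_power_sub_self_int[OF assms, of a] by (simp add: of_nat_poly)
  ultimately show ?case
    using pCons.IH prime_dvd_power_add_sub[OF assms, of "[:a:]" "X * g"]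
    by (metis dvd_diff dvd_mult)
qed

lemma prime_not_dvd_const_sub_mult:
  fixes f C :: "int poly"
  assumes p: "prime p" and c: "\<not> int p dvd c"
    and f: "\<not> int p dvd lead_coeff f" "degree f \<noteq> 0"
  shows "\<not> of_nat p dvd [:c:] - f * C"
proof
  interpret poly_mod_prime "int p" using p by unfold_locales simp
  assume "of_nat p dvd [:c:] - f * C"
  then obtain D where "[:c:] - f * C = smult (int p) D" by (auto simp: of_nat_poly elim!: dvdE)
  then have eq: "Mp [:c:] = Mp (f * C)"
    by (metis Mp_smult_m_0 diff_eq_eq diff_self plus_Mp(1))
  have c0: "Mp [:c:] \<noteq> 0" using c by (simp add: Mp_const_poly dvd_eq_mod_eq_0)
  have "degree_m [:c:] = degree_m f + degree_m C"
    by (rule degree_m_eq_prime[OF c0 _ eq]) (use c0 p in \<open>auto simp: Mp_const_poly\<close>)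
  moreover have "degree_m f = degree f"
    using f(1) prime_gt_1_nat[OF p] by (intro degree_m_eq) (auto simp: dvd_eq_mod_eq_0)
  ultimately show False using f(2) by (simp add: Mp_const_poly)
qed

section \<open>Galois conjugates of roots of unity\<close>

lemma primitive_dvd_smult_imp_dvd:
  fixes f Q :: "int poly"
  assumes "content f = 1" "c \<noteq> 0" "f dvd smult c Q"
  shows "f dvd Q"
proof -
  have "fract_poly f dvd smult (to_fract c) (fract_poly Q)"
    using fract_poly_dvd[OF assms(3)] by (simp add: fract_poly_smult)
  then have "fract_poly f dvd fract_poly Q"
    using assms(2) by (simp add: dvd_smult_iff)
  then show ?thesis using assms(1) by (rule fract_poly_dvdD)
qed

lemma int_poly_primitive_annihilator:
  fixes \<eta> :: "'a::{idom, ring_char_0}"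
  assumes "Q\<^sub>0 \<noteq> 0" "poly (of_int_poly Q\<^sub>0) \<eta> = 0"
  obtains f where "content f = 1" "poly (of_int_poly f) \<eta> = 0"
    "\<And>Q. poly (of_int_poly Q) \<eta> = 0 \<Longrightarrow> f dvd Q"
proof -
  define S where "S = {h :: int poly. h \<noteq> 0 \<and> poly (of_int_poly h) \<eta> = 0}"
  obtain h where "h \<in> S" and least: "\<And>h'. h' \<in> S \<Longrightarrow> degree h \<le> degree h'"
    using ex_has_least_nat[of "\<lambda>h. h \<in> S" Q\<^sub>0 degree] assms unfolding S_def by blast
  then have h: "h \<noteq> 0" "poly (of_int_poly h) \<eta> = 0" unfolding S_def by auto
  define f where "f = primitive_part h"
  have f: "content f = 1" "f \<noteq> 0" "degree f = degree h"
    using h(1) unfolding f_def by auto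
  have "poly (of_int_poly h) \<eta> = of_int (content h) * poly (of_int_poly f) \<eta>"
    unfolding f_def
    by (subst (1) content_times_primitive_part[symmetric]) (simp only: hom_distribs poly_smult)
  then have root: "poly (of_int_poly f) \<eta> = 0" using h by simp
  have "f dvd Q" if Q: "poly (of_int_poly Q) \<eta> = 0" for Q
  proof -
    obtain q r where qr: "pseudo_divmod Q f = (q, r)" by (cases "pseudo_divmod Q f")
    define c where "c = lead_coeff f ^ (Suc (degree Q) - degree f)"
    have eq: "smult c Q = f * q + r"
      unfolding c_def using pseudo_divmod(1)[OF f(2) qr] .
    have "poly (of_int_poly r) \<eta> = 0"
      using arg_cong[OF eq, of "\<lambda>P. poly (of_int_poly P) \<eta>"] Q root by (simp add: hom_distribs)
    then have "r = 0"
      using pseudo_divmod(2)[OF f(2) qr] least[of r] f(3) unfolding S_def by force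
    then have "f dvd smult c Q" using eq by simp
    moreover have "c \<noteq> 0" unfolding c_def using f(2) by simp
    ultimately show "f dvd Q" using f(1) primitive_dvd_smult_imp_dvd by blast
  qed
  then show thesis using that f(1) root by blast
qed

lemma bezout_factors_monom_sub_1:
  fixes f g :: "'a::idom poly"
  assumes "f * g = monom 1 m - 1"
  shows "[:of_nat m:]
       = f * (monom 1 1 * pderiv g - smult (of_nat m) g) + g * (monom 1 1 * pderiv f)"
proof -
  have "monom 1 1 * (f * pderiv g + g * pderiv f) = monom 1 1 * pderiv (monom 1 m - 1)"
    unfolding assms[symmetric] pderiv_mult by (simp add: algebra_simps)
  also have "\<dots> = smult (of_nat m) (monom 1 m)"
    by (cases m) (simp_all add: pderiv_diff pderiv_monom mult_monom smult_monom)
  also have "\<dots> = smult (of_nat m) (f * g) + [:of_nat m:]"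
    using assms by (simp add: smult_diff_right)
  finally show ?thesis by (simp add: algebra_simps)
qed

lemma lead_coeff_monom_sub_1:
  assumes "m > 0"
  shows "lead_coeff (monom 1 m - 1 :: 'a::comm_ring_1 poly) = 1"
  using lead_coeff_add_le[of "- 1 :: 'a poly" "monom 1 m"] assms by (simp add: degree_monom_eq)

lemma gcd_mult_left_eq_1_iff:
  fixes a b c :: nat
  shows "gcd (a * b) c = 1 \<longleftrightarrow> gcd a c = 1 \<and> gcd b c = 1"
  using coprime_mult_left_iff[of a b c] by (simp add: coprime_iff_gcd_eq_1)

lemma power_power_eq_1:
  fixes z :: "'a::monoid_mult"
  assumes "z ^ m = 1"
  shows "(z ^ c) ^ m = 1"
  using assms by (simp only: power_mult[symmetric] mult.commute[of c] power_mult power_one)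

lemma power_mod_eq_if_power_eq_1:
  fixes z :: "'a::monoid_mult"
  assumes "z ^ m = 1"
  shows "z ^ (n mod m) = z ^ n"
proof -
  have "z ^ n = z ^ (m * (n div m) + n mod m)" by simp
  also have "\<dots> = (z ^ m) ^ (n div m) * z ^ (n mod m)" by (simp only: power_add power_mult)
  finally show ?thesis using assms by simp
qed

lemma factor_monom_sub_1_not_dvd_cofactor_pcompose:
  fixes f g :: "int poly"
  assumes fg: "f * g = monom 1 m - 1" and m: "m > 0" and f: "degree f \<noteq> 0"
    and p: "prime p" "\<not> p dvd m"
  shows "\<not> f dvd g \<circ>\<^sub>p monom 1 p"
proof
  assume "f dvd g \<circ>\<^sub>p monom 1 p"
  then obtain h where h: "g \<circ>\<^sub>p monom 1 p = f * h" by (elim dvdE)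
  have "lead_coeff f * lead_coeff g = 1"
    using fg lead_coeff_monom_sub_1[OF m] by (metis lead_coeff_mult)
  then have f_lead: "\<not> int p dvd lead_coeff f"
    using p(1) by (metis dvd_mult2 not_prime_unit prime_nat_int_transfer)
  define A where "A = monom 1 1 * pderiv g - smult (of_nat m) g"
  define B where "B = monom 1 1 * pderiv f"
  have AB: "[:int m:] = f * A + g * B"
    using bezout_factors_monom_sub_1[OF fg] unfolding A_def B_def by simp
  (* Raise AB to the p-th power and use g^p \<equiv> g(X^p) = f h (mod p): f divides m^p modulo p. *)
  have "[:int m ^ p:] - f * (f ^ (p - 1) * A ^ p + h * B ^ p)
      = ((f * A + g * B) ^ p - ((f * A) ^ p + (g * B) ^ p)) + B ^ p * (g ^ p - g \<circ>\<^sub>p monom 1 p)"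
  proof -
    have "f * f ^ (p - 1) = f ^ p"
      using prime_gt_0_nat[OF p(1)] by (simp add: power_eq_if)
    then show ?thesis
      unfolding AB[symmetric] h by (simp add: algebra_simps power_mult_distrib poly_const_pow)
  qed
  then have "of_nat p dvd [:int m ^ p:] - f * (f ^ (p - 1) * A ^ p + h * B ^ p)"
    using prime_dvd_power_add_sub[OF p(1)] prime_dvd_pcompose_monom_sub_power[OF p(1), of g]
    by (metis dvd_add dvd_minus_iff dvd_mult minus_diff_eq)
  moreover have "\<not> int p dvd int m ^ p"
    using p by (metis int_dvd_int_iff of_nat_power prime_dvd_power_iff prime_gt_0_nat)
  ultimately show False
    using prime_not_dvd_const_sub_mult[OF p(1) _ f_lead f] by blast
qed

lemma poly_root_of_unity_power_prime:
  fixes P :: "int poly" and \<eta> :: "'a::{idom, ring_char_0}"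
  assumes m: "m > 0" "\<eta> ^ m = 1" and p: "prime p" "\<not> p dvd m"
    and root: "poly (of_int_poly P) \<eta> = 0"
  shows "poly (of_int_poly P) (\<eta> ^ p) = 0"
proof -
  define U :: "int poly" where "U = monom 1 m - 1"
  have U_eval: "poly (of_int_poly U) z = z ^ m - 1" for z :: 'a
    unfolding U_def by (simp add: hom_distribs poly_monom)
  have "U \<noteq> 0" using U_eval[of 0] m(1) by (auto simp: power_0_left)
  then obtain f where f: "content f = 1" "poly (of_int_poly f) \<eta> = 0"
    and f_dvd: "\<And>Q. poly (of_int_poly Q) \<eta> = 0 \<Longrightarrow> f dvd Q"
    using int_poly_primitive_annihilator[of U \<eta>] U_eval m(2) by auto
  obtain g where fg: "f * g = U" using f_dvd[of U] U_eval m(2) by (auto elim!: dvdE)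
  have f_deg: "degree f \<noteq> 0"
  proof
    assume "degree f = 0"
    then obtain c where "f = [:c:]" by (rule degree_eq_zeroE)
    then show False using f by simp
  qed
  have "poly (of_int_poly f) (\<eta> ^ p) = 0"
  proof (rule ccontr)
    assume "poly (of_int_poly f) (\<eta> ^ p) \<noteq> 0"
    moreover have "(\<eta> ^ p) ^ m = 1" using m(2) by (rule power_power_eq_1)
    ultimately have "poly (of_int_poly g) (\<eta> ^ p) = 0"
      using U_eval[of "\<eta> ^ p"] fg[symmetric] by (simp add: hom_distribs)
    then have "f dvd g \<circ>\<^sub>p monom 1 p"
      by (intro f_dvd) (simp add: hom_distribs poly_pcompose poly_monom)
    then show False
      using factor_monom_sub_1_not_dvd_cofactor_pcompose[OF fg[unfolded U_def] m(1) f_deg p]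
      by blast
  qed
  then show ?thesis using f_dvd[OF root] by (auto simp: hom_distribs elim!: dvdE)
qed

lemma poly_root_of_unity_power_coprime:
  fixes P :: "int poly" and \<eta> :: "'a::{idom, ring_char_0}"
  assumes m: "m > 0" "\<eta> ^ m = 1" and root: "poly (of_int_poly P) \<eta> = 0"
    and c: "gcd c m = 1"
  shows "poly (of_int_poly P) (\<eta> ^ c) = 0"
  using c
proof (induction c rule: prime_divisors_induct)
  case zero
  then show ?case using m root by simp
next
  case (unit c)
  then show ?case using root by simp
next
  case (factor p c)
  then have c: "gcd c m = 1"
    unfolding gcd_mult_left_eq_1_iff by simp
  have p: "\<not> p dvd m"
  proof
    assume "p dvd m"
    then have "p dvd gcd (p * c) m" by simp
    then show False using factor.prems factor.hyps by simp
  qed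
  have "(\<eta> ^ c) ^ m = 1" using m(2) by (rule power_power_eq_1)
  from poly_root_of_unity_power_prime[OF m(1) this factor.hyps(1) p factor.IH[OF c]]
  have "poly (of_int_poly P) ((\<eta> ^ c) ^ p) = 0" .
  then show ?case by (simp only: power_mult[symmetric] mult.commute[of c])
qed

lemma poly_root_of_unity_conjugate:
  fixes P :: "int poly" and \<zeta> :: "'a::{idom, ring_char_0}"
  assumes m: "m > 0" "\<zeta> ^ m = 1" and ab: "gcd a m = 1" "gcd b m = 1"
    and root: "poly (of_int_poly P) (\<zeta> ^ a) = 0"
  shows "poly (of_int_poly P) (\<zeta> ^ b) = 0"
proof -
  obtain x where x: "[a * x = 1] (mod m)"
    using cong_solve_coprime_nat[of a m, unfolded coprime_iff_gcd_eq_1, OF ab(1)] by auto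
  then have "gcd (a * x) m = 1" by (simp add: cong_gcd_eq)
  then have "gcd (x * b) m = 1"
    using ab(2) unfolding gcd_mult_left_eq_1_iff by simp
  moreover have "(\<zeta> ^ a) ^ m = 1" using m(2) by (rule power_power_eq_1)
  ultimately have "poly (of_int_poly P) ((\<zeta> ^ a) ^ (x * b)) = 0"
    using poly_root_of_unity_power_coprime[OF m(1) _ root] by simp
  moreover have "(\<zeta> ^ a) ^ (x * b) = \<zeta> ^ b"
  proof -
    have "(a * (x * b)) mod m = b mod m"
      using cong_scalar_right[OF x, of b] by (simp add: cong_def mult.assoc)
    then show ?thesis
      by (metis power_mult power_mod_eq_if_power_eq_1[OF m(2)])
  qed
  ultimately show ?thesis by simp
qed

section \<open>The discrete Fourier transform\<close>

lemma sum_lessThan_rotate: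
  fixes f :: "nat \<Rightarrow> 'a::comm_monoid_add" and k t :: nat
  shows "(\<Sum>d<k. f ((d + t) mod k)) = (\<Sum>l<k. f l)"
proof (rule sum.reindex_bij_witness[where j = "\<lambda>d. (d + t) mod k"
                                        and i = "\<lambda>l. (l + (k - t mod k)) mod k"])
  fix d assume d: "d \<in> {..<k}"
  then have "t mod k < k" "k * (t div k) + t mod k = t" by auto
  then have eq: "d + t + (k - t mod k) = d + k * (t div k) + k" by linarith
  have "(d + t + (k - t mod k)) mod k = d" unfolding eq using d by simp
  then show "((d + t) mod k + (k - t mod k)) mod k = d" by (simp only: mod_add_left_eq)
next
  fix l assume l: "l \<in> {..<k}"
  then have "t mod k < k" "k * (t div k) + t mod k = t" by auto
  then have eq: "l + (k - t mod k) + t = l + k * (t div k) + k" by linarith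
  have "(l + (k - t mod k) + t) mod k = l" unfolding eq using l by simp
  then show "((l + (k - t mod k)) mod k + t) mod k = l" by (simp only: mod_add_left_eq)
qed auto

lemma cyc_stat2_0_eq: "cyc_stat2 k x d 0 = (\<Sum>t<k. x ((d + t) mod k) * x t)"
proof -
  define G where "G t = x ((d + t) mod k) * x t" for t
  have "cyc_stat2 k x d 0 = (\<Sum>t<k. G (Suc t mod k))"
    unfolding cyc_stat2_def G_def One_nat_def sum.atLeast1_atMost_eq by (simp add: mod_add_right_eq)
  also have "\<dots> = (\<Sum>t<k. G t)"
    using sum_lessThan_rotate[of G 1 k] by simp
  finally show ?thesis unfolding G_def .
qed

definition seq_poly :: "nat \<Rightarrow> (nat \<Rightarrow> int) \<Rightarrow> int poly" where
  "seq_poly k x = (\<Sum>l<k. monom (x l) l)"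

lemma poly_seq_poly:
  fixes z :: "'a::comm_ring_1"
  shows "poly (of_int_poly (seq_poly k x)) z = (\<Sum>l<k. of_int (x l) * z ^ l)"
  by (simp add: seq_poly_def hom_distribs poly_monom)

lemma dft_eq_poly_seq_poly: "dft k x j = poly (of_int_poly (seq_poly k x)) (cis (2 * pi / k) ^ j)"
  unfolding dft_def poly_seq_poly
proof (intro sum.cong refl arg_cong2[where f = "(*)"])
  fix l
  have "(cis (2 * pi / k) ^ j) ^ l = cis (real l * (real j * (2 * pi / k)))"
    by (simp add: Complex.DeMoivre)
  also have "\<dots> = exp (2 * of_real pi * \<i> * of_nat (j * l) / of_nat k)"
    by (simp add: cis_conv_exp field_simps)
  finally show "exp (2 * of_real pi * \<i> * of_nat (j * l) / of_nat k) = (cis (2 * pi / k) ^ j) ^ l"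
    by simp
qed

lemma cis_2pi_div_power_self: "cis (2 * pi / k) ^ k = 1"
  by (cases "k = 0") (simp_all add: Complex.DeMoivre)

lemma poly_seq_poly_mult_cnj:
  fixes \<omega> :: complex
  assumes \<omega>: "\<omega> ^ k = 1" "cnj \<omega> * \<omega> = 1"
  shows "poly (of_int_poly (seq_poly k x)) \<omega> * cnj (poly (of_int_poly (seq_poly k x)) \<omega>)
       = (\<Sum>d<k. of_int (cyc_stat2 k x d 0) * \<omega> ^ d)"
proof -
  define X where "X = poly (of_int_poly (seq_poly k x)) \<omega>"
  have X: "X = (\<Sum>l<k. of_int (x l) * \<omega> ^ l)" unfolding X_def poly_seq_poly ..
  have rotated: "(\<Sum>d<k. of_int (x ((d + t) mod k)) * \<omega> ^ d) = cnj (\<omega> ^ t) * X" for t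
  proof -
    have "cnj (\<omega> ^ t) * X
        = (\<Sum>d<k. cnj (\<omega> ^ t) * (of_int (x ((d + t) mod k)) * \<omega> ^ ((d + t) mod k)))"
      unfolding X sum_distrib_left by (rule sum_lessThan_rotate[symmetric])
    also have "\<dots> = (\<Sum>d<k. of_int (x ((d + t) mod k)) * \<omega> ^ d)"
    proof (rule sum.cong[OF refl])
      fix d
      have "cnj (\<omega> ^ t) * \<omega> ^ t = 1"
        using \<omega>(2) by (metis complex_cnj_power power_mult_distrib power_one)
      then show "cnj (\<omega> ^ t) * (of_int (x ((d + t) mod k)) * \<omega> ^ ((d + t) mod k))
          = of_int (x ((d + t) mod k)) * \<omega> ^ d"
        by (simp add: power_mod_eq_if_power_eq_1[OF \<omega>(1)] power_add mult_ac)
    qed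
    finally show ?thesis ..
  qed
  have "(\<Sum>d<k. of_int (cyc_stat2 k x d 0) * \<omega> ^ d)
      = (\<Sum>d<k. \<Sum>t<k. of_int (x ((d + t) mod k)) * of_int (x t) * \<omega> ^ d)"
    by (simp add: cyc_stat2_0_eq sum_distrib_right)
  also have "\<dots> = (\<Sum>t<k. of_int (x t) * (\<Sum>d<k. of_int (x ((d + t) mod k)) * \<omega> ^ d))"
    by (subst sum.swap) (simp add: sum_distrib_left mult_ac)
  also have "\<dots> = (\<Sum>t<k. of_int (x t) * cnj (\<omega> ^ t)) * X"
    unfolding rotated sum_distrib_right by (simp add: mult_ac)
  also have "(\<Sum>t<k. of_int (x t) * cnj (\<omega> ^ t)) = cnj X"
    by (simp add: X)
  finally show ?thesis unfolding X_def by (simp add: mult.commute)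
qed

lemma dft_eq_0_iff_if_cyc_stat2_eq:
  assumes "\<And>d. cyc_stat2 k x d 0 = cyc_stat2 k y d 0"
  shows "dft k x j = 0 \<longleftrightarrow> dft k y j = 0"
proof -
  define \<omega> where "\<omega> = cis (2 * pi / k) ^ j"
  have \<omega>: "\<omega> ^ k = 1" "cnj \<omega> * \<omega> = 1"
    unfolding \<omega>_def using power_power_eq_1[OF cis_2pi_div_power_self]
    by (simp_all add: cis_cnj cis_mult flip: power_mult_distrib)
  have "dft k x j * cnj (dft k x j) = dft k y j * cnj (dft k y j)"
    unfolding dft_eq_poly_seq_poly \<omega>_def[symmetric] poly_seq_poly_mult_cnj[OF \<omega>] assms ..
  then show ?thesis by (metis complex_cnj_zero_iff mult_eq_0_iff)
qed

lemma G_set_elim: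
  assumes "j \<in> G_set k \<alpha>"
  obtains a m where "j = \<alpha> * a" "k = \<alpha> * m" "gcd a m = 1" "\<alpha> > 0" "m > 0"
proof -
  have j: "j \<in> {1..k}" "gcd j k = \<alpha>" using assms unfolding G_set_def by auto
  then have "\<alpha> dvd j" "\<alpha> dvd k" "\<alpha> > 0" "\<alpha> \<le> k" by (auto intro: gcd_le2_nat)
  moreover have "gcd (j div \<alpha>) (k div \<alpha>) = 1"
    using div_gcd_coprime[of j k] j by (auto simp: coprime_iff_gcd_eq_1)
  ultimately show thesis by (intro that[of "j div \<alpha>" "k div \<alpha>"]) auto
qed

lemma dft_eq_0_on_G_set:
  assumes "j \<in> G_set k \<alpha>" "j' \<in> G_set k \<alpha>" and zero: "dft k x j = 0"
  shows "dft k x j' = 0"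
proof -
  obtain a m where j: "j = \<alpha> * a" "k = \<alpha> * m" "gcd a m = 1" "\<alpha> > 0" "m > 0"
    using G_set_elim[OF assms(1)] .
  obtain b m' where j': "j' = \<alpha> * b" "k = \<alpha> * m'" "gcd b m' = 1"
    using G_set_elim[OF assms(2)] .
  have "m' = m" using j j' by auto
  define \<zeta> where "\<zeta> = cis (2 * pi / k) ^ \<alpha>"
  have "\<zeta> ^ m = 1"
    unfolding \<zeta>_def power_mult[symmetric] j(2)[symmetric] by (rule cis_2pi_div_power_self)
  have dft_\<zeta>: "dft k x (\<alpha> * c) = poly (of_int_poly (seq_poly k x)) (\<zeta> ^ c)" for c
    unfolding dft_eq_poly_seq_poly \<zeta>_def power_mult ..
  have "poly (of_int_poly (seq_poly k x)) (\<zeta> ^ a) = 0" using zero unfolding j(1) dft_\<zeta> .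
  moreover have "gcd b m = 1" using j'(3) \<open>m' = m\<close> by simp
  ultimately have "poly (of_int_poly (seq_poly k x)) (\<zeta> ^ b) = 0"
    using poly_root_of_unity_conjugate[OF \<open>m > 0\<close> \<open>\<zeta> ^ m = 1\<close> \<open>gcd a m = 1\<close>] by simp
  then show ?thesis unfolding j'(1) dft_\<zeta> .
qed

theorem lemma3p5:
  fixes k :: nat and x y :: "nat \<Rightarrow> int"
  assumes "k \<ge> 1"
    and "\<forall>i1 i2. cyc_stat2 k x i1 i2 = cyc_stat2 k y i1 i2"
    and "\<alpha> \<in> {1..k}"
  shows "(\<forall>j\<in>G_set k \<alpha>. dft k x j \<noteq> 0 \<and> dft k y j \<noteq> 0)
       \<or> (\<forall>j\<in>G_set k \<alpha>. dft k x j = 0 \<and> dft k y j = 0)"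
proof -
  have same_zeros: "dft k x j = 0 \<longleftrightarrow> dft k y j = 0" for j
    using assms(2) by (intro dft_eq_0_iff_if_cyc_stat2_eq) simp
  show ?thesis
  proof (cases "\<exists>j\<in>G_set k \<alpha>. dft k x j = 0")
    case True
    then show ?thesis using dft_eq_0_on_G_set same_zeros by blast
  next
    case False
    then show ?thesis using same_zeros by blast
  qed
qed

end
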